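(* For every graph $G$ and integer $k$, calling naive-fvs$(G,k,\emptyset)$ returns a feedback vertex set of $G$ of size at most $k$ if $G$ has one, and returns ``NO'' otherwise.
   Context: All graphs are finite, simple and undirected; $d_G(v)$ denotes the degree of $v$ in $G$, $G-S$ denotes deletion of a vertex set $S$, and $G[S]$ the induced subgraph. A feedback vertex set of $G$ is a set $V_-\subseteq V(G)$ such that $G-V_-$ is a forest. Algorithm naive-fvs$(G,k,F)$ (with $k$ an integer and $F\subseteq V(G)$ inducing a forest) returns a set of vertices or ``NO'' as follows (all choices among several candidates are arbitrary; degrees are in the current graph $G$): (0) If $k<0$ return NO; if $V(G)=\emptyset$ return $\emptyset$. (1) If some vertex $v$ has degree less than $2$, return naive-fvs$(G-\{v\},k,F\setminus\{v\})$. (2) If some $v\in V(G)\setminus F$ has two neighbors in the same connected component of $G[F]$, let $X=$ naive-fvs$(G-\{v\},k-1,F)$ and return $X\cup\{v\}$ (NO if $X$ is NO). (3) Pick $v\in V(G)\setminus F$ of maximum degree. (4) If $d(v)=2$: set $X=\emptyset$; while $G$ contains a cycle $C$, take any vertex $x$ of $C$ not in $F$, add $x$ to $X$ and delete $x$ from $G$; then return $X$ if $|X|\le k$, else NO. (5) Let $X=$ naive-fvs$(G-\{v\},k-1,F)$; if $X$ is not NO, return $X\cup\{v\}$. (6) Return naive-fvs$(G,k,F\cup\{v\})$. *)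

theory Defs
  imports Main
begin

type_synonym 'a graph = "'a set \<times> 'a set set"

definition verts :: "'a graph \<Rightarrow> 'a set" where "verts G = fst G"
definition edges :: "'a graph \<Rightarrow> 'a set set" where "edges G = snd G"

definition wf_graph :: "'a graph \<Rightarrow> bool" where
  "wf_graph G \<longleftrightarrow> finite (verts G) \<and>
     (\<forall>e\<in>edges G. \<exists>u v. e = {u, v} \<and> u \<noteq> v \<and> u \<in> verts G \<and> v \<in> verts G)"

definition del :: "'a graph \<Rightarrow> 'a set \<Rightarrow> 'a graph" where
  "del G S = (verts G - S, {e \<in> edges G. e \<inter> S = {}})"

definition induced :: "'a graph \<Rightarrow> 'a set \<Rightarrow> 'a graph" where
  "induced G S = (verts G \<inter> S, {e \<in> edges G. e \<subseteq> S})"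

definition adj :: "'a graph \<Rightarrow> 'a \<Rightarrow> 'a \<Rightarrow> bool" where
  "adj G u v \<longleftrightarrow> {u, v} \<in> edges G"

definition degree :: "'a graph \<Rightarrow> 'a \<Rightarrow> nat" where
  "degree G v = card {u. adj G u v}"

definition is_cycle :: "'a graph \<Rightarrow> 'a list \<Rightarrow> bool" where
  "is_cycle G cs \<longleftrightarrow> length cs \<ge> 3 \<and> distinct cs \<and> set cs \<subseteq> verts G \<and>
     (\<forall>i < length cs. adj G (cs ! i) (cs ! ((i + 1) mod length cs)))"

definition has_cycle :: "'a graph \<Rightarrow> bool" where
  "has_cycle G \<longleftrightarrow> (\<exists>cs. is_cycle G cs)"

definition forest :: "'a graph \<Rightarrow> bool" where
  "forest G \<longleftrightarrow> \<not> has_cycle G"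

definition is_fvs :: "'a graph \<Rightarrow> 'a set \<Rightarrow> bool" where
  "is_fvs G S \<longleftrightarrow> S \<subseteq> verts G \<and> forest (del G S)"

definition same_component :: "'a graph \<Rightarrow> 'a \<Rightarrow> 'a \<Rightarrow> bool" where
  "same_component G u v \<longleftrightarrow> u \<in> verts G \<and> v \<in> verts G \<and> (adj G)\<^sup>*\<^sup>* u v"

definition two_nbrs_same_comp :: "'a graph \<Rightarrow> 'a set \<Rightarrow> 'a \<Rightarrow> bool" where
  "two_nbrs_same_comp G F v \<longleftrightarrow>
     (\<exists>u w. u \<noteq> w \<and> adj G v u \<and> adj G v w \<and> same_component (induced G F) u w)"

text \<open>Step (4): the while loop, as a relation (arbitrary choices of cycle and vertex).
  cycle_break G F X: starting from G, the loop may terminate having collected X.\<close>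
inductive cycle_break :: "'a graph \<Rightarrow> 'a set \<Rightarrow> 'a set \<Rightarrow> bool" where
  stop: "\<not> has_cycle G \<Longrightarrow> cycle_break G F {}"
| step: "is_cycle G cs \<Longrightarrow> x \<in> set cs \<Longrightarrow> x \<notin> F \<Longrightarrow>
         cycle_break (del G {x}) F X \<Longrightarrow> cycle_break G F (insert x X)"

text \<open>naive_fvs G k F R: some run of naive-fvs(G,k,F) (with some resolution of
  the arbitrary choices) returns R; None encodes NO.  The guards encode the
  order of the steps (a later step applies only if earlier ones do not).\<close>
inductive naive_fvs :: "'a graph \<Rightarrow> int \<Rightarrow> 'a set \<Rightarrow> 'a set option \<Rightarrow> bool" where
  s0_neg: "k < 0 \<Longrightarrow> naive_fvs G k F None"
| s0_empty: "k \<ge> 0 \<Longrightarrow> verts G = {} \<Longrightarrow> naive_fvs G k F (Some {})"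
| s1: "k \<ge> 0 \<Longrightarrow> verts G \<noteq> {} \<Longrightarrow> v \<in> verts G \<Longrightarrow> degree G v < 2 \<Longrightarrow>
       naive_fvs (del G {v}) k (F - {v}) R \<Longrightarrow> naive_fvs G k F R"
| s2: "k \<ge> 0 \<Longrightarrow> verts G \<noteq> {} \<Longrightarrow> (\<forall>u\<in>verts G. degree G u \<ge> 2) \<Longrightarrow>
       v \<in> verts G - F \<Longrightarrow> two_nbrs_same_comp G F v \<Longrightarrow>
       naive_fvs (del G {v}) (k - 1) F R \<Longrightarrow> naive_fvs G k F (map_option (insert v) R)"
| s4: "k \<ge> 0 \<Longrightarrow> verts G \<noteq> {} \<Longrightarrow> (\<forall>u\<in>verts G. degree G u \<ge> 2) \<Longrightarrow>
       (\<forall>u\<in>verts G - F. \<not> two_nbrs_same_comp G F u) \<Longrightarrow>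
       v \<in> verts G - F \<Longrightarrow> (\<forall>u\<in>verts G - F. degree G u \<le> degree G v) \<Longrightarrow>
       degree G v = 2 \<Longrightarrow> cycle_break G F X \<Longrightarrow>
       naive_fvs G k F (if int (card X) \<le> k then Some X else None)"
| s5: "k \<ge> 0 \<Longrightarrow> verts G \<noteq> {} \<Longrightarrow> (\<forall>u\<in>verts G. degree G u \<ge> 2) \<Longrightarrow>
       (\<forall>u\<in>verts G - F. \<not> two_nbrs_same_comp G F u) \<Longrightarrow>
       v \<in> verts G - F \<Longrightarrow> (\<forall>u\<in>verts G - F. degree G u \<le> degree G v) \<Longrightarrow>
       degree G v \<noteq> 2 \<Longrightarrow> naive_fvs (del G {v}) (k - 1) F (Some X) \<Longrightarrow>
       naive_fvs G k F (Some (insert v X))"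
| s6: "k \<ge> 0 \<Longrightarrow> verts G \<noteq> {} \<Longrightarrow> (\<forall>u\<in>verts G. degree G u \<ge> 2) \<Longrightarrow>
       (\<forall>u\<in>verts G - F. \<not> two_nbrs_same_comp G F u) \<Longrightarrow>
       v \<in> verts G - F \<Longrightarrow> (\<forall>u\<in>verts G - F. degree G u \<le> degree G v) \<Longrightarrow>
       degree G v \<noteq> 2 \<Longrightarrow> naive_fvs (del G {v}) (k - 1) F None \<Longrightarrow>
       naive_fvs G k (insert v F) R \<Longrightarrow> naive_fvs G k F R"

end

theory Submission
  imports Defs
begin

text \<open>
  Every run ends: each recursive call deletes a vertex or moves a free vertex into \<open>F\<close>, so
  \<open>|V| + |V - F|\<close> decreases, and some step always applies, because a graph of minimum degree two
  contains a cycle while \<open>G[F]\<close> is a forest, so a free vertex exists when step (3) is reached.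

  Correctness is proved for every run, relative to feedback vertex sets disjoint from \<open>F\<close>.
  Steps (1), (2), (5) and (6) are exact reductions: a vertex of degree below two lies on no cycle,
  and a free vertex with two neighbours in one component of \<open>G[F]\<close> closes a cycle through \<open>F\<close>.
  The heart is step (4), where all free vertices have degree at most two: deleting any free vertex
  \<open>x\<close> of a cycle is optimal by an exchange argument. If a solution \<open>S\<close> avoids \<open>x\<close>, then walking
  along the cycle from \<open>x\<close> one meets some \<open>y \<in> S\<close> whose two neighbours lie in different components
  of \<open>G - (S \<union> {x})\<close>, so \<open>S - {y} \<union> {x}\<close> is again a solution.
\<close>

lemma adj_commute: "adj G u v \<longleftrightarrow> adj G v u"
  by (simp add: adj_def insert_commute)

lemma symp_adj: "symp (adj G)"
  unfolding symp_def adj_def by (simp add: insert_commute)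

lemma rtranclp_adj_commute: "(adj G)\<^sup>*\<^sup>* u v \<Longrightarrow> (adj G)\<^sup>*\<^sup>* v u"
  using sympD[OF symp_rtranclp[OF symp_adj]] .

lemma adj_wf_graphD:
  "wf_graph G \<Longrightarrow> adj G u v \<Longrightarrow> u \<in> verts G \<and> v \<in> verts G \<and> u \<noteq> v"
  unfolding wf_graph_def adj_def by (auto simp: doubleton_eq_iff)

lemma verts_del [simp]: "verts (del G S) = verts G - S"
  by (simp add: del_def verts_def)

lemma adj_del [simp]: "adj (del G S) u v \<longleftrightarrow> adj G u v \<and> u \<notin> S \<and> v \<notin> S"
  by (auto simp: del_def adj_def edges_def)

lemma verts_induced [simp]: "verts (induced G S) = verts G \<inter> S"
  by (simp add: induced_def verts_def)

lemma adj_induced [simp]: "adj (induced G S) u v \<longleftrightarrow> adj G u v \<and> u \<in> S \<and> v \<in> S"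
  by (auto simp: induced_def adj_def edges_def)

lemma del_del [simp]: "del (del G A) B = del G (A \<union> B)"
  by (auto simp: del_def verts_def edges_def)

lemma del_empty [simp]: "del G {} = G"
  by (simp add: del_def verts_def edges_def)

lemma finite_verts: "wf_graph G \<Longrightarrow> finite (verts G)"
  by (simp add: wf_graph_def)

lemma wf_graph_del:
  assumes "wf_graph G"
  shows "wf_graph (del G S)"
  unfolding wf_graph_def
proof (intro conjI ballI)
  show "finite (verts (del G S))" using finite_verts[OF assms] by simp
  fix e assume "e \<in> edges (del G S)"
  then have e: "e \<in> edges G" "e \<inter> S = {}" by (auto simp: del_def edges_def)
  then obtain u v where "e = {u, v}" "u \<noteq> v" "u \<in> verts G" "v \<in> verts G"
    using assms unfolding wf_graph_def by blast
  with e(2) show "\<exists>u v. e = {u, v} \<and> u \<noteq> v \<and> u \<in> verts (del G S) \<and> v \<in> verts (del G S)"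
    by auto
qed

lemma wf_graph_induced:
  assumes "wf_graph G"
  shows "wf_graph (induced G S)"
  unfolding wf_graph_def
proof (intro conjI ballI)
  show "finite (verts (induced G S))" using finite_verts[OF assms] by simp
  fix e assume "e \<in> edges (induced G S)"
  then have e: "e \<in> edges G" "e \<subseteq> S" by (auto simp: induced_def edges_def)
  then obtain u v where "e = {u, v}" "u \<noteq> v" "u \<in> verts G" "v \<in> verts G"
    using assms unfolding wf_graph_def by blast
  with e(2) show "\<exists>u v. e = {u, v} \<and> u \<noteq> v \<and> u \<in> verts (induced G S) \<and> v \<in> verts (induced G S)"
    by auto
qed

lemma finite_neighbours:
  assumes "wf_graph G"
  shows "finite {u. adj G u v}"
proof -
  have "{u. adj G u v} \<subseteq> verts G" using adj_wf_graphD[OF assms] by auto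
  then show ?thesis using finite_subset finite_verts[OF assms] by blast
qed

lemma degree_del_le: "wf_graph G \<Longrightarrow> degree (del G S) v \<le> degree G v"
  unfolding degree_def by (rule card_mono[OF finite_neighbours]) auto

lemma two_le_degreeI:
  assumes "wf_graph G" "u \<noteq> w" "adj G v u" "adj G v w"
  shows "2 \<le> degree G v"
proof -
  have "{u, w} \<subseteq> {z. adj G z v}" using assms(3,4) by (auto simp: adj_commute)
  moreover have "card {u, w} = 2" using assms(2) by simp
  ultimately show ?thesis unfolding degree_def by (metis card_mono finite_neighbours[OF assms(1)])
qed

lemma neighbour_of_degree_le_two:
  assumes "wf_graph G" "degree G y \<le> 2" "adj G y a" "adj G y b" "a \<noteq> b" "adj G y c"
  shows "c = a \<or> c = b"
proof (rule ccontr)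
  assume "\<not> (c = a \<or> c = b)"
  then have "card {a, b, c} = 3" using assms(5) by (auto simp: card_insert_if)
  moreover have "{a, b, c} \<subseteq> {u. adj G u y}" using assms(3,4,6) by (auto simp: adj_commute)
  ultimately have "3 \<le> degree G y" unfolding degree_def by (metis card_mono finite_neighbours[OF assms(1)])
  then show False using assms(2) by simp
qed

section \<open>Cycles, paths and forests\<close>

lemma is_cycle_transfer:
  assumes "is_cycle G cs" "set cs \<subseteq> verts H"
    "\<And>a b. a \<in> set cs \<Longrightarrow> b \<in> set cs \<Longrightarrow> adj G a b \<Longrightarrow> adj H a b"
  shows "is_cycle H cs"
  unfolding is_cycle_def
proof (intro conjI allI impI)
  show "3 \<le> length cs" "distinct cs" using assms(1) by (auto simp: is_cycle_def)
  show "set cs \<subseteq> verts H" by fact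
  fix i assume i: "i < length cs"
  then have "(i + 1) mod length cs < length cs" by (intro mod_less_divisor) linarith
  then have "cs ! i \<in> set cs" "cs ! ((i + 1) mod length cs) \<in> set cs" using i nth_mem by blast+
  with assms(1,3) i show "adj H (cs ! i) (cs ! ((i + 1) mod length cs))"
    unfolding is_cycle_def by blast
qed

lemma is_cycle_mono:
  "is_cycle H cs \<Longrightarrow> verts H \<subseteq> verts K \<Longrightarrow> (\<And>a b. adj H a b \<Longrightarrow> adj K a b) \<Longrightarrow> is_cycle K cs"
  unfolding is_cycle_def by blast

lemma forest_mono:
  "forest K \<Longrightarrow> verts H \<subseteq> verts K \<Longrightarrow> (\<And>a b. adj H a b \<Longrightarrow> adj K a b) \<Longrightarrow> forest H"
  unfolding forest_def has_cycle_def using is_cycle_mono by blast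

lemma forest_del_mono: "forest (del G S) \<Longrightarrow> S \<subseteq> T \<Longrightarrow> forest (del G T)"
  by (erule forest_mono) auto

lemma forest_no_verts: "verts G = {} \<Longrightarrow> forest G"
  by (auto simp: forest_def has_cycle_def is_cycle_def)

lemma is_cycle_rotate:
  assumes "is_cycle G cs"
  shows "is_cycle G (rotate m cs)"
proof -
  let ?n = "length cs"
  have "adj G (rotate m cs ! i) (rotate m cs ! ((i + 1) mod ?n))" if "i < ?n" for i
  proof -
    have n0: "0 < ?n" using that by linarith
    have "rotate m cs ! i = cs ! ((m + i) mod ?n)" using nth_rotate that by blast
    moreover have "rotate m cs ! ((i + 1) mod ?n) = cs ! ((m + (i + 1) mod ?n) mod ?n)"
      using nth_rotate[of "(i + 1) mod ?n" cs m] n0 by simp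
    moreover have "(m + (i + 1) mod ?n) mod ?n = ((m + i) mod ?n + 1) mod ?n"
      by (metis add.assoc mod_add_left_eq mod_add_right_eq)
    moreover have "(m + i) mod ?n < ?n" using n0 by simp
    ultimately show ?thesis using assms unfolding is_cycle_def by metis
  qed
  then show ?thesis using assms unfolding is_cycle_def by simp
qed

lemma is_cycle_rotate_to:
  assumes "is_cycle G cs" "y \<in> set cs"
  obtains p where "is_cycle G (y # p)" "set (y # p) = set cs"
proof -
  obtain j where j: "j < length cs" "cs ! j = y" using assms(2) by (auto simp: in_set_conv_nth)
  then have "rotate j cs ! 0 = y" using nth_rotate[of 0 cs j] by (cases cs) auto
  moreover have "rotate j cs \<noteq> []" using j by auto
  ultimately have "rotate j cs = y # tl (rotate j cs)" by (cases "rotate j cs") auto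
  then show thesis using that is_cycle_rotate[OF assms(1), of j] by (metis set_rotate)
qed

lemma is_cycle_iff_successively:
  "is_cycle G cs \<longleftrightarrow> 3 \<le> length cs \<and> distinct cs \<and> set cs \<subseteq> verts G \<and>
     successively (adj G) cs \<and> adj G (last cs) (hd cs)"
proof -
  have "(\<forall>i < length cs. adj G (cs ! i) (cs ! ((i + 1) mod length cs))) \<longleftrightarrow>
        successively (adj G) cs \<and> adj G (last cs) (hd cs)" if "3 \<le> length cs"
  proof -
    have "cs \<noteq> []" using that by auto
    then have last: "last cs = cs ! (length cs - 1)" "hd cs = cs ! 0"
      by (simp_all add: last_conv_nth hd_conv_nth)
    let ?n = "length cs"
    have wrap: "(i + 1) mod ?n = (if Suc i < ?n then Suc i else 0)" if "i < ?n" for i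
      using that by (auto simp: mod_if)
    have split: "Suc i < ?n \<or> i = ?n - 1" if "i < ?n" for i
      using that by linarith
    have "(\<forall>i < ?n. adj G (cs ! i) (cs ! ((i + 1) mod ?n))) \<longleftrightarrow>
          (\<forall>i. Suc i < ?n \<longrightarrow> adj G (cs ! i) (cs ! Suc i)) \<and> adj G (cs ! (?n - 1)) (cs ! 0)"
    proof safe
      fix i assume "\<forall>i < ?n. adj G (cs ! i) (cs ! ((i + 1) mod ?n))" "Suc i < ?n"
      then show "adj G (cs ! i) (cs ! Suc i)" by (metis Suc_eq_plus1 Suc_lessD mod_less)
    next
      assume all: "\<forall>i < ?n. adj G (cs ! i) (cs ! ((i + 1) mod ?n))"
      have "?n - 1 < ?n" "?n - 1 + 1 = ?n" using that by auto
      then have "?n - 1 < ?n" "(?n - 1 + 1) mod ?n = 0" by simp_all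
      then show "adj G (cs ! (?n - 1)) (cs ! 0)" using all by metis
    next
      fix i assume "\<forall>i. Suc i < ?n \<longrightarrow> adj G (cs ! i) (cs ! Suc i)"
        "adj G (cs ! (?n - 1)) (cs ! 0)" "i < ?n"
      then show "adj G (cs ! i) (cs ! ((i + 1) mod ?n))" using wrap[of i] split[of i] by auto
    qed
    then show ?thesis unfolding successively_conv_nth last .
  qed
  then show ?thesis unfolding is_cycle_def by auto
qed

lemma successively_rtranclp: "successively R xs \<Longrightarrow> xs \<noteq> [] \<Longrightarrow> R\<^sup>*\<^sup>* (hd xs) (last xs)"
  by (induction xs) (auto simp: successively_Cons intro: converse_rtranclp_into_rtranclp)

definition is_path :: "'a graph \<Rightarrow> 'a list \<Rightarrow> bool" where
  "is_path G p \<longleftrightarrow> p \<noteq> [] \<and> distinct p \<and> set p \<subseteq> verts G \<and> successively (adj G) p"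

lemma successively_append_left: "successively P (xs @ ys) \<Longrightarrow> successively P xs"
  by (simp add: successively_append_iff)

lemma rtranclp_adj_obtain_path:
  assumes "(adj G)\<^sup>*\<^sup>* u v" "wf_graph G" "u \<in> verts G"
  obtains p where "is_path G p" "hd p = u" "last p = v"
proof -
  from assms(1) have "\<exists>p. is_path G p \<and> hd p = u \<and> last p = v"
  proof (induction rule: rtranclp_induct)
    case base
    then show ?case using assms(3) by (intro exI[of _ "[u]"]) (simp add: is_path_def)
  next
    case (step b c)
    then obtain p where p: "is_path G p" "hd p = u" "last p = b" by blast
    show ?case
    proof (cases "c \<in> set p")
      case True
      then obtain xs ys where p_eq: "p = xs @ c # ys" by (meson split_list)
      have "is_path G (xs @ [c])"
        using p(1) successively_append_left[of _ "xs @ [c]" ys] unfolding is_path_def p_eq by auto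
      moreover have "hd (xs @ [c]) = u" using p(2) unfolding p_eq by (cases xs) auto
      ultimately show ?thesis by (intro exI[of _ "xs @ [c]"]) simp
    next
      case False
      have "c \<in> verts G" using adj_wf_graphD[OF assms(2) step(2)] by simp
      then have "is_path G (p @ [c])"
        using p step(2) False by (auto simp: is_path_def successively_append_iff)
      moreover have "hd (p @ [c]) = u" using p(1,2) by (simp add: is_path_def)
      ultimately show ?thesis by (intro exI[of _ "p @ [c]"]) simp
    qed
  qed
  then show thesis using that by blast
qed

lemma has_cycle_closing_path:
  assumes "is_path H p" "hd p \<noteq> last p" "c \<notin> set p" "c \<in> verts K" "verts H \<subseteq> verts K"
    "\<And>a b. adj H a b \<Longrightarrow> adj K a b" "adj K c (hd p)" "adj K (last p) c"
  shows "has_cycle K"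
proof -
  have p: "p \<noteq> []" "distinct p" "set p \<subseteq> verts H" "successively (adj H) p"
    using assms(1) by (auto simp: is_path_def)
  have "length p \<noteq> 1" using assms(2) by (cases p) auto
  with p(1) have "3 \<le> length (c # p)" by (cases p) (auto simp: Suc_le_eq)
  moreover have "successively (adj K) (c # p)"
    using p(1,4) assms(6,7) by (auto simp: successively_Cons intro: successively_mono)
  ultimately have "is_cycle K (c # p)"
    using p assms(3-5,8) by (auto simp: is_cycle_iff_successively)
  then show ?thesis unfolding has_cycle_def by blast
qed

lemma is_path_length_le:
  assumes "is_path G p" "finite (verts G)"
  shows "length p \<le> card (verts G)"
proof -
  have "length p = card (set p)" using assms(1) by (simp add: is_path_def distinct_card)
  also have "\<dots> \<le> card (verts G)" using assms by (intro card_mono) (auto simp: is_path_def)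
  finally show ?thesis .
qed

lemma obtain_longest_path:
  assumes "wf_graph G" "v \<in> verts G"
  obtains p where "is_path G p" "\<And>q. is_path G q \<Longrightarrow> length q \<le> length p"
proof -
  have "is_path G [v]" using assms(2) by (simp add: is_path_def)
  moreover have "\<forall>q. is_path G q \<longrightarrow> length q < Suc (card (verts G))"
    using is_path_length_le[OF _ finite_verts[OF assms(1)]] by (simp add: less_Suc_eq_le)
  ultimately show thesis using ex_has_greatest_nat[of "is_path G" "[v]" length] that by blast
qed

text \<open>The first vertex of a longest path has all its neighbours on the path; a neighbour other
  than its successor closes a cycle.\<close>

lemma min_degree_two_has_cycle:
  assumes wf: "wf_graph G" and ne: "verts G \<noteq> {}" and deg: "\<forall>u\<in>verts G. 2 \<le> degree G u"
  shows "has_cycle G"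
proof -
  obtain v where "v \<in> verts G" using ne by blast
  then obtain p where p: "is_path G p" and longest: "\<And>q. is_path G q \<Longrightarrow> length q \<le> length p"
    using obtain_longest_path[OF wf] by blast
  then obtain b q where p_eq: "p = b # q" unfolding is_path_def by (cases p) auto
  have bV: "b \<in> verts G" using p p_eq by (auto simp: is_path_def)
  have nbr_in_q: "z \<in> set q" if "adj G z b" for z
  proof (rule ccontr)
    assume "z \<notin> set q"
    moreover have "z \<noteq> b" "z \<in> verts G" using adj_wf_graphD[OF wf that] by auto
    ultimately have "is_path G (z # p)"
      using p that unfolding p_eq is_path_def by (auto simp: successively_Cons)
    then show False using longest[of "z # p"] by simp
  qed
  have "\<exists>z. adj G z b \<and> z \<noteq> hd q"
  proof (rule ccontr)
    assume "\<not> ?thesis"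
    then have "{z. adj G z b} \<subseteq> {hd q}" by blast
    then have "card {z. adj G z b} \<le> 1" using card_mono[of "{hd q}"] by fastforce
    then show False using deg bV unfolding degree_def by fastforce
  qed
  then obtain z where z: "adj G z b" "z \<noteq> hd q" by blast
  then obtain xs ys where q_eq: "q = xs @ z # ys" using nbr_in_q split_list by metis
  then have "xs \<noteq> []" using z(2) by auto
  have "successively (adj G) ((b # xs @ [z]) @ ys)"
    using p unfolding is_path_def p_eq q_eq by simp
  then have "successively (adj G) (b # xs @ [z])" by (rule successively_append_left)
  then have "is_cycle G (b # xs @ [z])"
    using p z(1) \<open>xs \<noteq> []\<close> unfolding is_cycle_iff_successively is_path_def p_eq q_eq
    by (auto simp: Suc_le_eq)
  then show ?thesis unfolding has_cycle_def by blast
qed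

section \<open>Adding a vertex to a forest\<close>

definition nbrs_same_component :: "'a graph \<Rightarrow> 'a graph \<Rightarrow> 'a \<Rightarrow> bool" where
  "nbrs_same_component G H y \<longleftrightarrow>
     (\<exists>u w. u \<noteq> w \<and> adj G y u \<and> adj G y w \<and> same_component H u w)"

lemma two_nbrs_same_comp_iff: "two_nbrs_same_comp G F v \<longleftrightarrow> nbrs_same_component G (induced G F) v"
  by (simp add: two_nbrs_same_comp_def nbrs_same_component_def)

lemma same_component_commute: "same_component H u w \<longleftrightarrow> same_component H w u"
  unfolding same_component_def by (auto intro: rtranclp_adj_commute)

lemma same_component_trans:
  "same_component H u v \<Longrightarrow> same_component H v w \<Longrightarrow> same_component H u w"
  unfolding same_component_def by (meson rtranclp_trans)

lemma nbrs_same_component_subgraph: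
  "nbrs_same_component G' H y \<Longrightarrow> (\<And>u. adj G' y u \<Longrightarrow> adj G y u) \<Longrightarrow> nbrs_same_component G H y"
  unfolding nbrs_same_component_def by blast

lemma has_cycle_if_nbrs_same_component:
  assumes "wf_graph H" "nbrs_same_component K H c"
    "c \<notin> verts H" "c \<in> verts K" "verts H \<subseteq> verts K" "\<And>a b. adj H a b \<Longrightarrow> adj K a b"
  shows "has_cycle K"
proof -
  obtain u w where uw: "u \<noteq> w" "adj K c u" "adj K c w" "u \<in> verts H" "(adj H)\<^sup>*\<^sup>* u w"
    using assms(2) unfolding nbrs_same_component_def same_component_def by blast
  obtain p where p: "is_path H p" "hd p = u" "last p = w"
    using rtranclp_adj_obtain_path[OF uw(5) assms(1) uw(4)] .
  show ?thesis
  proof (rule has_cycle_closing_path[OF p(1)])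
    show "hd p \<noteq> last p" using p(2,3) uw(1) by simp
    show "c \<notin> set p" using p(1) assms(3) by (auto simp: is_path_def)
    show "adj K c (hd p)" using p(2) uw(2) by simp
    show "adj K (last p) c" using p(3) uw(3) adj_commute by metis
  qed (use assms(4-6) in auto)
qed

lemma nbrs_same_component_if_cycle:
  assumes "forest H" "is_cycle H' cs" "verts H' - {y} \<subseteq> verts H"
    "\<And>a b. a \<noteq> y \<Longrightarrow> b \<noteq> y \<Longrightarrow> adj H' a b \<Longrightarrow> adj H a b"
  shows "nbrs_same_component H' H y"
proof -
  have "y \<in> set cs"
  proof (rule ccontr)
    assume y: "y \<notin> set cs"
    have "is_cycle H cs"
    proof (rule is_cycle_transfer[OF assms(2)])
      show "set cs \<subseteq> verts H" using y assms(2,3) by (auto simp: is_cycle_def)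
      show "adj H a b" if "a \<in> set cs" "b \<in> set cs" "adj H' a b" for a b
        using that y assms(4) by metis
    qed
    then show False using assms(1) by (auto simp: forest_def has_cycle_def)
  qed
  then obtain p where "is_cycle H' (y # p)" using is_cycle_rotate_to[OF assms(2)] by blast
  then have "3 \<le> length (y # p)" "distinct (y # p)" "set (y # p) \<subseteq> verts H'"
      "successively (adj H') (y # p)" "adj H' (last (y # p)) y"
    unfolding is_cycle_iff_successively by simp_all
  then have p: "2 \<le> length p" "distinct p" "y \<notin> set p" "set p \<subseteq> verts H'"
      "successively (adj H') p" "adj H' y (hd p)" "adj H' (last p) y"
    by (auto simp: successively_Cons split: if_splits)
  then have "p \<noteq> []" by auto
  have "successively (adj H) p"
    by (rule successively_mono[OF p(5)]) (use p(3) assms(4) in metis)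
  then have "(adj H)\<^sup>*\<^sup>* (hd p) (last p)" using \<open>p \<noteq> []\<close> by (rule successively_rtranclp)
  moreover have "hd p \<noteq> last p"
    using p(1,2) by (cases p) (auto simp: Suc_le_eq)
  moreover have "hd p \<in> verts H" "last p \<in> verts H"
    using hd_in_set[OF \<open>p \<noteq> []\<close>] last_in_set[OF \<open>p \<noteq> []\<close>] p(3,4) assms(3) by blast+
  moreover have "adj H' y (last p)" using p(7) by (simp add: adj_commute)
  ultimately have "same_component H (hd p) (last p)" unfolding same_component_def by blast
  then show ?thesis unfolding nbrs_same_component_def
    using \<open>hd p \<noteq> last p\<close> p(6) \<open>adj H' y (last p)\<close> by blast
qed

lemma forest_add_vertex:
  assumes "forest H" "\<not> nbrs_same_component H' H y" "verts H' - {y} \<subseteq> verts H"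
    "\<And>a b. a \<noteq> y \<Longrightarrow> b \<noteq> y \<Longrightarrow> adj H' a b \<Longrightarrow> adj H a b"
  shows "forest H'"
  using nbrs_same_component_if_cycle[OF assms(1) _ assms(3,4)] assms(2)
  unfolding forest_def has_cycle_def by blast

lemma is_fvs_finite: "wf_graph G \<Longrightarrow> is_fvs G S \<Longrightarrow> finite S"
  unfolding is_fvs_def using finite_subset finite_verts by blast

lemma is_fvs_del: "is_fvs G S \<Longrightarrow> is_fvs (del G {v}) (S - {v})"
  unfolding is_fvs_def by (auto elim: forest_del_mono)

lemma is_fvs_insert: "is_fvs (del G {v}) X \<Longrightarrow> v \<in> verts G \<Longrightarrow> is_fvs G (insert v X)"
  unfolding is_fvs_def by auto

lemma is_fvs_if_del_low_degree:
  assumes "wf_graph G" "degree G v < 2" "is_fvs (del G {v}) X"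
  shows "is_fvs G X"
proof -
  have "\<not> nbrs_same_component (del G X) (del G (insert v X)) v"
    using assms(1,2) two_le_degreeI[OF assms(1)] unfolding nbrs_same_component_def
    by (metis adj_del not_le)
  then have "forest (del G X)"
    by (rule forest_add_vertex[rotated]) (use assms(3) in \<open>auto simp: is_fvs_def\<close>)
  then show ?thesis using assms(3) by (auto simp: is_fvs_def)
qed

lemma mem_fvs_if_two_nbrs_same_comp:
  assumes "wf_graph G" "two_nbrs_same_comp G F v" "v \<in> verts G - F" "is_fvs G S" "S \<inter> F = {}"
  shows "v \<in> S"
proof (rule ccontr)
  assume "v \<notin> S"
  have "nbrs_same_component (del G S) (induced G F) v"
    using assms(2,5) \<open>v \<notin> S\<close> unfolding two_nbrs_same_comp_def nbrs_same_component_def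
      same_component_def by auto
  then have "has_cycle (del G S)"
    by (rule has_cycle_if_nbrs_same_component[OF wf_graph_induced[OF assms(1)]])
      (use assms(3,5) \<open>v \<notin> S\<close> in auto)
  then show False using assms(4) by (simp add: is_fvs_def forest_def)
qed

section \<open>The cycle-breaking loop of step (4)\<close>

lemma successively_adj_rev: "successively (adj G) (rev p) \<longleftrightarrow> successively (adj G) p"
proof
  assume "successively (adj G) (rev p)"
  then have "successively (\<lambda>a b. adj G b a) p" by simp
  then show "successively (adj G) p" by (rule successively_mono) (simp add: adj_commute)
next
  assume "successively (adj G) p"
  then have "successively (\<lambda>a b. adj G b a) p" by (rule successively_mono) (simp add: adj_commute)
  then show "successively (adj G) (rev p)" by simp
qed

lemma is_cycle_Cons_rev:
  assumes "is_cycle G (x # p)"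
  shows "is_cycle G (x # rev p)"
proof -
  have "p \<noteq> []" using assms by (auto simp: is_cycle_def)
  then have "successively (adj G) p" "adj G x (hd p)" "adj G (last p) x"
    using assms by (auto simp: is_cycle_iff_successively successively_Cons)
  moreover have "hd (rev p) = last p" "last (x # rev p) = hd p"
    using \<open>p \<noteq> []\<close> by (simp_all add: hd_rev last_rev)
  moreover note successively_adj_rev[of G p]
  ultimately have "successively (adj G) (x # rev p)" "adj G (last (x # rev p)) x"
    using \<open>p \<noteq> []\<close> by (auto simp del: successively_rev simp: successively_Cons adj_commute[of G x])
  then show ?thesis using assms by (simp add: is_cycle_iff_successively)
qed

lemma not_nbrs_same_component_deg_le_two:
  assumes "wf_graph G" "degree G y \<le> 2" "adj G y a" "adj G y c" "a \<noteq> c"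
    "\<not> same_component H a c"
  shows "\<not> nbrs_same_component G H y"
  using neighbour_of_degree_le_two[OF assms(1-5)] assms(5,6) same_component_commute
  unfolding nbrs_same_component_def by metis

lemma not_nbrs_same_component_cycle_start:
  assumes "wf_graph G" "is_cycle G (x # p)" "degree G (hd p) \<le> 2" "x \<notin> verts H"
  shows "\<not> nbrs_same_component G H (hd p)"
proof -
  have cyc: "3 \<le> length (x # p)" "distinct (x # p)" "successively (adj G) (x # p)"
    using assms(2) by (simp_all add: is_cycle_iff_successively)
  then obtain a b rest where p_eq: "p = a # b # rest"
    by (cases p; cases "tl p") auto
  have "adj G a x" "adj G a b" "x \<noteq> b" using cyc unfolding p_eq by (auto simp: adj_commute)
  moreover have "\<not> same_component H x b" using assms(4) by (simp add: same_component_def)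
  ultimately show ?thesis
    using not_nbrs_same_component_deg_le_two[OF assms(1)] assms(3) unfolding p_eq by simp
qed

lemma not_same_component_cycle_ends:
  assumes wf: "wf_graph G" and forest: "forest (del G S)" and "x \<notin> S"
    and cyc: "is_cycle G (x # p)" and ends: "hd p \<notin> S" "last p \<notin> S"
  shows "\<not> same_component (del G (insert x S)) (hd p) (last p)"
proof
  let ?H = "del G (insert x S)"
  assume same: "same_component ?H (hd p) (last p)"
  have p: "p \<noteq> []" "2 \<le> length p" "distinct p" "adj G x (hd p)" "adj G (last p) x"
    using cyc by (auto simp: is_cycle_iff_successively successively_Cons split: if_splits)
  have "hd p \<noteq> last p" using p(1-3) by (cases p) (auto simp: Suc_le_eq)
  moreover have "adj G x (last p)" using p(5) adj_commute by metis
  ultimately have "nbrs_same_component (del G S) ?H x"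
    using same p(4) \<open>x \<notin> S\<close> ends unfolding nbrs_same_component_def
    by (intro exI[of _ "hd p"] exI[of _ "last p"]) simp
  then have "has_cycle (del G S)"
    by (rule has_cycle_if_nbrs_same_component[OF wf_graph_del[OF wf]])
      (use cyc \<open>x \<notin> S\<close> in \<open>auto simp: is_cycle_def\<close>)
  then show False using forest by (simp add: forest_def)
qed

text \<open>The last vertex of the cycle lying in the component of \<open>hd p\<close> in \<open>G - (S \<union> {x})\<close> is
  followed by a vertex of \<open>S\<close>, whose two neighbours lie in different components.\<close>

lemma not_nbrs_same_component_inside_cycle:
  assumes wf: "wf_graph G" and deg: "\<forall>y\<in>S. degree G y \<le> 2" and forest: "forest (del G S)"
    and "x \<notin> S" and cyc: "is_cycle G (x # p)" and ends: "hd p \<notin> S" "last p \<notin> S"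
  shows "\<exists>y\<in>S. \<not> nbrs_same_component G (del G (insert x S)) y"
proof -
  let ?H = "del G (insert x S)"
  define A where "A = {z. same_component ?H (hd p) z}"
  have p: "p \<noteq> []" "distinct (x # p)" "set p \<subseteq> verts G" "successively (adj G) p"
    using cyc by (auto simp: is_cycle_iff_successively successively_Cons split: if_splits)
  have "hd p \<in> verts ?H" using p(1-3) ends(1) hd_in_set[OF p(1)] by auto
  then have "hd p \<in> A" unfolding A_def same_component_def by simp
  have "last p \<notin> A"
    using not_same_component_cycle_ends[OF wf forest \<open>x \<notin> S\<close> cyc ends] unfolding A_def by simp
  obtain xs a ys where split: "p = xs @ a # ys" "a \<in> A" "\<forall>z\<in>set ys. z \<notin> A"
    using split_list_last_prop[of p "\<lambda>z. z \<in> A"] \<open>hd p \<in> A\<close> hd_in_set[OF p(1)] by blast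
  then obtain b zs where ys: "ys = b # zs" using \<open>last p \<notin> A\<close> by (cases ys) auto
  have "adj G a b" using p(4) unfolding split(1) ys by (simp add: successively_append_iff)
  have "b \<in> S"
  proof (rule ccontr)
    assume "b \<notin> S"
    moreover have "b \<noteq> x" "b \<in> verts G" using p(2,3) unfolding split(1) ys by auto
    ultimately have "adj ?H a b" using \<open>adj G a b\<close> \<open>a \<in> A\<close> unfolding A_def same_component_def
      by auto
    then have "same_component ?H a b"
      using adj_wf_graphD[OF wf_graph_del[OF wf]] unfolding same_component_def by blast
    then have "b \<in> A"
      using \<open>a \<in> A\<close> same_component_trans[of ?H "hd p" a b] unfolding A_def by simp
    then show False using split(3) ys by simp
  qed
  then obtain c zs' where zs: "zs = c # zs'" using ends(2) split(1) ys by (cases zs) auto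
  have "adj G b a" "adj G b c" "a \<noteq> c"
    using p(2,4) unfolding split(1) ys zs by (auto simp: successively_append_iff adj_commute)
  moreover have "\<not> same_component ?H a c"
  proof
    assume "same_component ?H a c"
    then have "c \<in> A"
      using \<open>a \<in> A\<close> same_component_trans[of ?H "hd p" a c] unfolding A_def by simp
    then show False using split(3) unfolding ys zs by simp
  qed
  ultimately have "\<not> nbrs_same_component G ?H b"
    using not_nbrs_same_component_deg_le_two[OF wf] deg \<open>b \<in> S\<close> by simp
  with \<open>b \<in> S\<close> show ?thesis by blast
qed

lemma fvs_exchange:
  assumes wf: "wf_graph G" and deg: "\<forall>y\<in>S. degree G y \<le> 2" and S: "is_fvs G S"
    and "x \<notin> S" and cyc: "is_cycle G (x # p)"
  obtains y where "y \<in> S" "is_fvs (del G {x}) (S - {y})"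
proof -
  let ?H = "del G (insert x S)"
  have forest: "forest (del G S)" using S by (simp add: is_fvs_def)
  have "p \<noteq> []" using cyc by (auto simp: is_cycle_def)
  have "\<exists>y\<in>S. \<not> nbrs_same_component G ?H y"
  proof (cases "hd p \<in> S")
    case True
    then have "\<not> nbrs_same_component G ?H (hd p)"
      using not_nbrs_same_component_cycle_start[OF wf cyc, of ?H] deg by simp
    with True show ?thesis by blast
  next
    case hd: False
    show ?thesis
    proof (cases "last p \<in> S")
      case True
      then have "\<not> nbrs_same_component G ?H (last p)"
        using not_nbrs_same_component_cycle_start[OF wf is_cycle_Cons_rev[OF cyc], of ?H] deg
        by (simp add: hd_rev)
      with True show ?thesis by blast
    next
      case False
      then show ?thesis
        using not_nbrs_same_component_inside_cycle[OF wf deg forest \<open>x \<notin> S\<close> cyc hd] by blast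
    qed
  qed
  then obtain y where y: "y \<in> S" "\<not> nbrs_same_component G ?H y" by blast
  have "forest (del G (insert x S - {y}))"
  proof (rule forest_add_vertex[of ?H])
    show "forest ?H" using forest by (rule forest_del_mono) auto
    show "\<not> nbrs_same_component (del G (insert x S - {y})) ?H y"
      using y(2) nbrs_same_component_subgraph[of "del G (insert x S - {y})" ?H y G] by auto
  qed auto
  moreover have "insert x S - {y} = {x} \<union> (S - {y})" using y(1) \<open>x \<notin> S\<close> by auto
  ultimately have "forest (del (del G {x}) (S - {y}))" by (simp only: del_del)
  moreover have "S - {y} \<subseteq> verts (del G {x})" using S \<open>x \<notin> S\<close> by (auto simp: is_fvs_def)
  ultimately have "is_fvs (del G {x}) (S - {y})" unfolding is_fvs_def by blast
  with y(1) show thesis by (rule that)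
qed

lemma fvs_del_cycle_vertex:
  assumes wf: "wf_graph G" and deg: "\<forall>u\<in>verts G - F. degree G u \<le> 2"
    and S: "is_fvs G S" "S \<inter> F = {}" and cyc: "is_cycle G cs" "x \<in> set cs"
  obtains S' where "is_fvs (del G {x}) S'" "S' \<inter> F = {}" "card S' + 1 \<le> card S"
proof -
  have finS: "finite S" using is_fvs_finite[OF wf S(1)] .
  obtain y where y: "y \<in> S" "is_fvs (del G {x}) (S - {y})"
  proof (cases "x \<in> S")
    case True
    then show thesis using that is_fvs_del[OF S(1), of x] by blast
  next
    case False
    obtain p where "is_cycle G (x # p)" using is_cycle_rotate_to[OF cyc] by blast
    moreover have "\<forall>y\<in>S. degree G y \<le> 2" using deg S by (auto simp: is_fvs_def)
    ultimately show thesis using fvs_exchange[OF wf _ S(1) False] that by blast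
  qed
  have "card (S - {y}) + 1 \<le> card S" using card.remove[OF finS y(1)] by simp
  moreover have "(S - {y}) \<inter> F = {}" using S(2) by blast
  ultimately show thesis using that y(2) by blast
qed

lemma cycle_break_subset: "cycle_break G F X \<Longrightarrow> X \<subseteq> verts G \<and> X \<inter> F = {} \<and> finite X"
  by (induction rule: cycle_break.induct) (auto simp: is_cycle_def)

lemma cycle_break_is_fvs: "cycle_break G F X \<Longrightarrow> is_fvs G X"
proof (induction rule: cycle_break.induct)
  case (stop G F)
  then show ?case by (simp add: is_fvs_def forest_def)
next
  case (step G cs x F X)
  then have "x \<in> verts G" by (auto simp: is_cycle_def)
  with step.IH show ?case by (rule is_fvs_insert)
qed

lemma cycle_break_exists:
  assumes "wf_graph G" "forest (induced G F)"
  shows "\<exists>X. cycle_break G F X"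
  using assms
proof (induction "card (verts G)" arbitrary: G rule: less_induct)
  case less
  show ?case
  proof (cases "has_cycle G")
    case False
    then show ?thesis using cycle_break.stop by blast
  next
    case True
    then obtain cs where cs: "is_cycle G cs" unfolding has_cycle_def by blast
    have "\<not> set cs \<subseteq> F"
    proof
      assume "set cs \<subseteq> F"
      then have "is_cycle (induced G F) cs"
        by (intro is_cycle_transfer[OF cs]) (use cs in \<open>auto simp: is_cycle_def\<close>)
      then show False using less.prems(2) by (auto simp: forest_def has_cycle_def)
    qed
    then obtain x where x: "x \<in> set cs" "x \<notin> F" by blast
    then have "x \<in> verts G" using cs by (auto simp: is_cycle_def)
    then have "card (verts (del G {x})) < card (verts G)"
      using card_Diff1_less[OF finite_verts[OF less.prems(1)]] by simp
    moreover have "forest (induced (del G {x}) F)"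
      using less.prems(2) by (rule forest_mono) auto
    ultimately obtain X where "cycle_break (del G {x}) F X"
      using less.hyps wf_graph_del[OF less.prems(1)] by blast
    then show ?thesis using cycle_break.step[OF cs x] by blast
  qed
qed

lemma cycle_break_optimal:
  assumes "cycle_break G F X" "wf_graph G" "\<forall>u\<in>verts G - F. degree G u \<le> 2"
    "is_fvs G S" "S \<inter> F = {}"
  shows "card X \<le> card S"
  using assms
proof (induction arbitrary: S rule: cycle_break.induct)
  case (stop G F)
  then show ?case by simp
next
  case (step G cs x F X)
  obtain S' where S': "is_fvs (del G {x}) S'" "S' \<inter> F = {}" "card S' + 1 \<le> card S"
    using fvs_del_cycle_vertex[OF step.prems step.hyps(1,2)] .
  have "\<forall>u\<in>verts (del G {x}) - F. degree (del G {x}) u \<le> 2"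
  proof
    fix u assume "u \<in> verts (del G {x}) - F"
    then have "degree G u \<le> 2" using step.prems(2) by simp
    then show "degree (del G {x}) u \<le> 2" using degree_del_le[OF step.prems(1), of "{x}" u] by simp
  qed
  then have "card X \<le> card S'"
    using step.IH[OF wf_graph_del[OF step.prems(1)] _ S'(1,2)] by blast
  moreover have "x \<notin> X" "finite X" using cycle_break_subset[OF step.hyps(4)] by auto
  ultimately show ?case using S'(3) by simp
qed

section \<open>Correctness of every run\<close>

definition fvs_avoiding :: "'a graph \<Rightarrow> int \<Rightarrow> 'a set \<Rightarrow> 'a set \<Rightarrow> bool" where
  "fvs_avoiding G k F S \<longleftrightarrow> is_fvs G S \<and> S \<inter> F = {} \<and> int (card S) \<le> k"

definition correct_answer :: "'a graph \<Rightarrow> int \<Rightarrow> 'a set \<Rightarrow> 'a set option \<Rightarrow> bool" where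
  "correct_answer G k F R \<longleftrightarrow>
     (case R of None \<Rightarrow> \<not> (\<exists>S. fvs_avoiding G k F S) | Some X \<Rightarrow> fvs_avoiding G k F X)"

lemma fvs_avoiding_del:
  assumes "wf_graph G" "fvs_avoiding G k F S" "v \<in> S"
  shows "fvs_avoiding (del G {v}) (k - 1) F (S - {v})"
proof -
  have "finite S" using is_fvs_finite[OF assms(1)] assms(2) by (simp add: fvs_avoiding_def)
  then have "card S = Suc (card (S - {v}))" using assms(3) by (rule card.remove)
  then show ?thesis using assms(2) is_fvs_del[of G S v] by (auto simp: fvs_avoiding_def)
qed

lemma fvs_avoiding_del_free:
  "fvs_avoiding G k F S \<Longrightarrow> fvs_avoiding (del G {v}) k (F - {v}) (S - {v})"
  using is_fvs_del[of G S v] card_Diff1_le[of S v] by (auto simp: fvs_avoiding_def)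

lemma fvs_avoiding_insert:
  assumes "wf_graph G" "fvs_avoiding (del G {v}) (k - 1) F X" "v \<in> verts G - F"
  shows "fvs_avoiding G k F (insert v X)"
proof -
  have "is_fvs (del G {v}) X" using assms(2) by (simp add: fvs_avoiding_def)
  then have "finite X" by (rule is_fvs_finite[OF wf_graph_del[OF assms(1)]])
  then show ?thesis
    using assms(2,3) is_fvs_insert[of G v X] by (auto simp: fvs_avoiding_def card_insert_if)
qed

lemma correct_answer_del_low_degree:
  assumes "wf_graph G" "degree G v < 2" "correct_answer (del G {v}) k (F - {v}) R"
  shows "correct_answer G k F R"
proof (cases R)
  case None
  have "\<not> fvs_avoiding G k F S" for S
    using assms(3) None fvs_avoiding_del_free[of G k F S v] by (auto simp: correct_answer_def)
  then show ?thesis using None by (simp add: correct_answer_def)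
next
  case (Some X)
  then have "fvs_avoiding (del G {v}) k (F - {v}) X" using assms(3) by (simp add: correct_answer_def)
  moreover have "X \<subseteq> verts G - {v}" using calculation by (simp add: fvs_avoiding_def is_fvs_def)
  ultimately show ?thesis using Some is_fvs_if_del_low_degree[OF assms(1,2)]
    by (auto simp: correct_answer_def fvs_avoiding_def)
qed

lemma correct_answer_forced:
  assumes "wf_graph G" "two_nbrs_same_comp G F v" "v \<in> verts G - F"
    "correct_answer (del G {v}) (k - 1) F R"
  shows "correct_answer G k F (map_option (insert v) R)"
proof (cases R)
  case None
  have "\<not> fvs_avoiding G k F S" for S
  proof
    assume S: "fvs_avoiding G k F S"
    then have "v \<in> S"
      using mem_fvs_if_two_nbrs_same_comp[OF assms(1-3)] by (simp add: fvs_avoiding_def)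
    then have "fvs_avoiding (del G {v}) (k - 1) F (S - {v})" by (rule fvs_avoiding_del[OF assms(1) S])
    then show False using assms(4) None by (auto simp: correct_answer_def)
  qed
  then show ?thesis using None by (simp add: correct_answer_def)
next
  case (Some X)
  then show ?thesis
    using assms(4) fvs_avoiding_insert[OF assms(1) _ assms(3)] by (simp add: correct_answer_def)
qed

lemma correct_answer_cycle_break:
  assumes "wf_graph G" "\<forall>u\<in>verts G - F. degree G u \<le> 2" "cycle_break G F X"
  shows "correct_answer G k F (if int (card X) \<le> k then Some X else None)"
proof -
  have "is_fvs G X" "X \<inter> F = {}"
    using cycle_break_is_fvs[OF assms(3)] cycle_break_subset[OF assms(3)] by auto
  moreover have "\<not> fvs_avoiding G k F S" if "\<not> int (card X) \<le> k" for S
    using cycle_break_optimal[OF assms(3,1,2), of S] that by (auto simp: fvs_avoiding_def)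
  ultimately show ?thesis by (simp add: correct_answer_def fvs_avoiding_def)
qed

lemma correct_answer_keep:
  assumes "wf_graph G" "correct_answer (del G {v}) (k - 1) F None"
    "correct_answer G k (insert v F) R"
  shows "correct_answer G k F R"
proof (cases R)
  case None
  have "\<not> fvs_avoiding G k F S" for S
  proof
    assume S: "fvs_avoiding G k F S"
    show False
    proof (cases "v \<in> S")
      case True
      then show False using assms(2) fvs_avoiding_del[OF assms(1) S] by (auto simp: correct_answer_def)
    next
      case False
      then have "fvs_avoiding G k (insert v F) S" using S by (auto simp: fvs_avoiding_def)
      then show False using assms(3) None by (auto simp: correct_answer_def)
    qed
  qed
  then show ?thesis using None by (simp add: correct_answer_def)
next
  case (Some X)
  then show ?thesis using assms(3) by (auto simp: correct_answer_def fvs_avoiding_def)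
qed

lemma naive_fvs_correct: "naive_fvs G k F R \<Longrightarrow> wf_graph G \<Longrightarrow> correct_answer G k F R"
proof (induction rule: naive_fvs.induct)
  case (s0_neg k G F)
  then show ?case by (simp add: correct_answer_def fvs_avoiding_def)
next
  case (s0_empty k G F)
  then show ?case by (simp add: correct_answer_def fvs_avoiding_def is_fvs_def forest_no_verts)
next
  case (s1 k G v F R)
  show ?case
    using correct_answer_del_low_degree[OF s1.prems s1.hyps(4) s1.IH[OF wf_graph_del[OF s1.prems]]] .
next
  case (s2 k G v F R)
  show ?case
    using correct_answer_forced[OF s2.prems s2.hyps(5,4) s2.IH[OF wf_graph_del[OF s2.prems]]] .
next
  case (s4 k G F v X)
  have "\<forall>u\<in>verts G - F. degree G u \<le> 2" using s4.hyps(6,7) by auto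
  then show ?case using correct_answer_cycle_break[OF s4.prems _ s4.hyps(8)] by blast
next
  case (s5 k G F v X)
  have "fvs_avoiding (del G {v}) (k - 1) F X"
    using s5.IH[OF wf_graph_del[OF s5.prems]] by (simp add: correct_answer_def)
  then show ?case using fvs_avoiding_insert[OF s5.prems _ s5.hyps(5)] by (simp add: correct_answer_def)
next
  case (s6 k G F v R)
  show ?case
    using correct_answer_keep[OF s6.prems s6.IH(1)[OF wf_graph_del[OF s6.prems]] s6.IH(2)[OF s6.prems]] .
qed

section \<open>Every call terminates with some answer\<close>

lemma forest_induced_del: "forest (induced G F) \<Longrightarrow> F' \<subseteq> F \<Longrightarrow> forest (induced (del G S) F')"
  by (erule forest_mono) auto

lemma forest_induced_insert:
  assumes "forest (induced G F)" "\<not> two_nbrs_same_comp G F v"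
  shows "forest (induced G (insert v F))"
proof (rule forest_add_vertex[OF assms(1)])
  show "\<not> nbrs_same_component (induced G (insert v F)) (induced G F) v"
    using assms(2) nbrs_same_component_subgraph[of "induced G (insert v F)" "induced G F" v G]
    by (auto simp: two_nbrs_same_comp_iff)
qed auto

lemma free_vertex_exists:
  assumes "wf_graph G" "verts G \<noteq> {}" "\<forall>u\<in>verts G. 2 \<le> degree G u" "forest (induced G F)"
  shows "verts G - F \<noteq> {}"
proof
  assume "verts G - F = {}"
  obtain cs where "is_cycle G cs"
    using min_degree_two_has_cycle[OF assms(1-3)] unfolding has_cycle_def by blast
  then have "is_cycle (induced G F) cs"
    by (rule is_cycle_mono) (use \<open>verts G - F = {}\<close> adj_wf_graphD[OF assms(1)] in auto)
  then show False using assms(4) by (auto simp: forest_def has_cycle_def)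
qed

lemma finite_obtain_max:
  fixes f :: "'a \<Rightarrow> nat"
  assumes "finite A" "A \<noteq> {}"
  obtains a where "a \<in> A" "\<forall>b\<in>A. f b \<le> f a"
proof -
  have "Max (f ` A) \<in> f ` A" using assms by simp
  moreover have "\<forall>b\<in>A. f b \<le> Max (f ` A)" using assms(1) by simp
  ultimately show thesis using that by force
qed

lemma card_verts_del_add_less:
  assumes "finite (verts G)" "v \<in> verts G" "F - {v} \<subseteq> F'"
  shows "card (verts (del G {v})) + card (verts (del G {v}) - F') < card (verts G) + card (verts G - F)"
proof -
  have "card (verts G - {v} - F') \<le> card (verts G - F)"
    using assms(1,3) by (intro card_mono) auto
  then show ?thesis using card_Diff1_less[OF assms(1,2)] by simp
qed

lemma card_Diff_insert_less:
  assumes "finite A" "v \<in> A - F"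
  shows "card (A - insert v F) < card (A - F)"
proof -
  have "A - insert v F = A - F - {v}" by blast
  then show ?thesis using card_Diff1_less[OF _ assms(2)] assms(1) by simp
qed

lemma naive_fvs_branch_run_exists:
  assumes wf: "wf_graph G" and forest: "forest (induced G F)" and k: "0 \<le> k"
    and ne: "verts G \<noteq> {}" and deg2: "\<forall>u\<in>verts G. 2 \<le> degree G u"
    and no2: "\<forall>u\<in>verts G - F. \<not> two_nbrs_same_comp G F u"
    and del_run: "\<And>v. v \<in> verts G - F \<Longrightarrow> \<exists>R. naive_fvs (del G {v}) (k - 1) F R"
    and keep_run: "\<And>v. v \<in> verts G - F \<Longrightarrow> \<exists>R. naive_fvs G k (insert v F) R"
  shows "\<exists>R. naive_fvs G k F R"
proof -
  obtain v where v: "v \<in> verts G - F" "\<forall>u\<in>verts G - F. degree G u \<le> degree G v"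
    using finite_obtain_max[of "verts G - F"] finite_verts[OF wf] free_vertex_exists[OF wf ne deg2 forest]
    by blast
  show ?thesis
  proof (cases "degree G v = 2")
    case True
    then show ?thesis using naive_fvs.s4[OF k ne deg2 no2 v] cycle_break_exists[OF wf forest] by blast
  next
    case False
    obtain R1 where "naive_fvs (del G {v}) (k - 1) F R1" using del_run[OF v(1)] by blast
    then show ?thesis
      using naive_fvs.s5[OF k ne deg2 no2 v False] naive_fvs.s6[OF k ne deg2 no2 v False] keep_run[OF v(1)]
      by (cases R1) blast+
  qed
qed

lemma naive_fvs_run_exists:
  assumes "wf_graph G" "forest (induced G F)"
  shows "\<exists>R. naive_fvs G k F R"
  using assms
proof (induction "card (verts G) + card (verts G - F)" arbitrary: G F k rule: less_induct)
  case less
  note wf = less.prems(1) and forest = less.prems(2)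
  have fin: "finite (verts G)" using finite_verts[OF wf] .
  have del_run: "\<exists>R. naive_fvs (del G {v}) k' F' R"
    if "v \<in> verts G" "F - {v} \<subseteq> F'" "F' \<subseteq> F" for v F' k'
    using less.hyps[OF card_verts_del_add_less[OF fin that(1,2)] wf_graph_del[OF wf]
        forest_induced_del[OF forest that(3)]] .
  have keep_run: "\<exists>R. naive_fvs G k' (insert v F) R"
    if "v \<in> verts G - F" "\<not> two_nbrs_same_comp G F v" for v k'
    using less.hyps[OF _ wf forest_induced_insert[OF forest that(2)]] card_Diff_insert_less[OF fin that(1)]
    by simp
  consider "k < 0" | "0 \<le> k" "verts G = {}" | "0 \<le> k" "verts G \<noteq> {}" "\<exists>v\<in>verts G. degree G v < 2"
    | "0 \<le> k" "verts G \<noteq> {}" "\<forall>u\<in>verts G. 2 \<le> degree G u"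
    by fastforce
  then show ?case
  proof cases
    case 1
    then show ?thesis using naive_fvs.s0_neg by blast
  next
    case 2
    then show ?thesis using naive_fvs.s0_empty by blast
  next
    case 3
    then obtain v where "v \<in> verts G" "degree G v < 2" by blast
    then show ?thesis using naive_fvs.s1[OF 3(1,2)] del_run[of v "F - {v}"] by blast
  next
    case 4
    show ?thesis
    proof (cases "\<exists>v\<in>verts G - F. two_nbrs_same_comp G F v")
      case True
      then obtain v where "v \<in> verts G - F" "two_nbrs_same_comp G F v" by blast
      then show ?thesis using naive_fvs.s2[OF 4] del_run[of v F] by blast
    next
      case False
      then have no2: "\<forall>u\<in>verts G - F. \<not> two_nbrs_same_comp G F u" by blast
      show ?thesis
      proof (rule naive_fvs_branch_run_exists[OF wf forest 4 no2])
        show "\<exists>R. naive_fvs (del G {v}) (k - 1) F R" if "v \<in> verts G - F" for v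
          using that by (intro del_run) auto
        show "\<exists>R. naive_fvs G k (insert v F) R" if "v \<in> verts G - F" for v
          using that no2 by (intro keep_run) auto
      qed
    qed
  qed
qed

theorem mainTheorem2:
  fixes G :: "'a graph" and k :: int
  assumes "wf_graph G"
  shows "(\<exists>R. naive_fvs G k {} R) \<and>
         (\<forall>R. naive_fvs G k {} R \<longrightarrow>
            (case R of
               None \<Rightarrow> \<not> (\<exists>S. is_fvs G S \<and> int (card S) \<le> k)
             | Some X \<Rightarrow> is_fvs G X \<and> int (card X) \<le> k))"
proof (intro conjI allI impI)
  show "\<exists>R. naive_fvs G k {} R"
    using naive_fvs_run_exists[OF assms] forest_no_verts[of "induced G {}"] by simp
next
  fix R assume "naive_fvs G k {} R"
  then have "correct_answer G k {} R" using naive_fvs_correct assms by blast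
  then show "case R of None \<Rightarrow> \<not> (\<exists>S. is_fvs G S \<and> int (card S) \<le> k)
             | Some X \<Rightarrow> is_fvs G X \<and> int (card X) \<le> k"
    by (cases R) (simp_all add: correct_answer_def fvs_avoiding_def)
qed

end
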